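(* Let $P$ be the program $l(X)\leftarrow p(X),r(X).\quad p(X)\leftarrow q(X,Y),p(Y).\quad r(f(X))\leftarrow s(Y),r(X).\quad q(f(Z),Z).\quad p(0).\quad r(0).\quad s(0).$ There is no linear norm $\|\cdot\|$ and linear level mapping $|\cdot|$ such that for all terms $X,Y$: $|\mathit{solve}(p(X))| > |\mathit{solve}((q(X,Y),p(Y)))|$, $|\mathit{solve}(r(f(X)))| > |\mathit{solve}((s(Y),r(X)))|$, and $|\mathit{solve}((s(Y),r(X)))| > |\mathit{solve}(r(X))|$, where $>$ is the usual order on natural numbers and $(\cdot,\cdot)$ is the binary functor $,/2$.
   Context: A norm maps terms to natural numbers and a level mapping maps atoms to natural numbers. A norm is linear if for every functor $f$ of arity $n$ (constants having arity $0$) $\|f(t_1,\dots,t_n)\|=c^f+\sum_{i=1}^n a^f_i\|t_i\|$, and a level mapping is linear if for every predicate $p$ of arity $n$ $|p(t_1,\dots,t_n)|=c^p+\sum_{i=1}^n a^p_i\|t_i\|$ for a linear norm $\|\cdot\|$, where all coefficients $c^f,a^f_i,c^p,a^p_i$ are non-negative integers. Here the atoms $\mathit{solve}(t)$ are atoms of a unary predicate $\mathit{solve}$ whose argument is a term built from the predicate symbols of $P$ (treated as functors) and the binary functor $,/2$. *)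

theory Defs
  imports Main
begin

text \<open>A functor is identified by its name together with its arity (the length of
  the argument list).  Atoms are represented in the same way (predicate symbol
  applied to arguments); predicate symbols may also be used as functors.\<close>

datatype gterm = Fn string "gterm list"

definition linear_norm :: "(gterm \<Rightarrow> nat) \<Rightarrow> bool" where
  "linear_norm nrm \<longleftrightarrow>
     (\<exists>c :: string \<Rightarrow> nat \<Rightarrow> nat. \<exists>a :: string \<Rightarrow> nat \<Rightarrow> nat \<Rightarrow> nat.
        \<forall>f ts. nrm (Fn f ts) =
                c f (length ts) + (\<Sum>i<length ts. a f (length ts) i * nrm (ts ! i)))"

definition linear_level_mapping :: "(gterm \<Rightarrow> nat) \<Rightarrow> (gterm \<Rightarrow> nat) \<Rightarrow> bool" where
  "linear_level_mapping nrm lvl \<longleftrightarrow>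
     (\<exists>c :: string \<Rightarrow> nat \<Rightarrow> nat. \<exists>a :: string \<Rightarrow> nat \<Rightarrow> nat \<Rightarrow> nat.
        \<forall>p ts. lvl (Fn p ts) =
                c p (length ts) + (\<Sum>i<length ts. a p (length ts) i * nrm (ts ! i)))"

inductive_set prog_terms :: "gterm set" where
  zero: "Fn ''0'' [] \<in> prog_terms"
| succ: "t \<in> prog_terms \<Longrightarrow> Fn ''f'' [t] \<in> prog_terms"

definition solve :: "gterm \<Rightarrow> gterm" where
  "solve t = Fn ''solve'' [t]"

definition conj :: "gterm \<Rightarrow> gterm \<Rightarrow> gterm" where
  "conj s t = Fn '','' [s, t]"

end

theory Submission
  imports Defs
begin

(* Under a linear norm and level mapping, |solve(t)| = C + A ||t|| and
   ||(u,v)|| = k + b1 ||u|| + b2 ||v||.  The decrease from p(0) to (q(0,0),p(0))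
   is impossible unless b2 = 0, so the level of solve((s(Y),r(X))) does not depend
   on X.  Then the last two decreases, for X = 0 and for X = f(0), yield
   |solve(r(f(0)))| > |solve((s(0),r(0)))| = |solve((s(0),r(f(0))))| > |solve(r(f(0)))|. *)

lemma linear_norm_binary:
  assumes "linear_norm nrm"
  obtains k b1 b2 where "\<And>u v. nrm (Fn g [u, v]) = k + b1 * nrm u + b2 * nrm v"
proof -
  from assms obtain c a where "\<And>f ts. nrm (Fn f ts) =
      c f (length ts) + (\<Sum>i<length ts. a f (length ts) i * nrm (ts ! i))"
    unfolding linear_norm_def by blast
  then have "nrm (Fn g [u, v]) = c g 2 + a g 2 0 * nrm u + a g 2 1 * nrm v" for u v
    by (simp add: numeral_2_eq_2)
  then show thesis by (rule that)
qed

lemma linear_level_mapping_unary: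
  assumes "linear_level_mapping nrm lvl"
  obtains C A where "\<And>t. lvl (Fn p [t]) = C + A * nrm t"
proof -
  from assms obtain c a where "\<And>f ts. lvl (Fn f ts) =
      c f (length ts) + (\<Sum>i<length ts. a f (length ts) i * nrm (ts ! i))"
    unfolding linear_level_mapping_def by blast
  then have "lvl (Fn p [t]) = c p 1 + a p 1 0 * nrm t" for t
    by simp
  then show thesis by (rule that)
qed

lemma solve_conj_level_independent_of_right:
  fixes nrm lvl :: "gterm \<Rightarrow> nat"
  assumes lvl_solve: "\<And>t. lvl (solve t) = C + A * nrm t"
    and nrm_conj: "\<And>u v. nrm (conj u v) = k + b1 * nrm u + b2 * nrm v"
    and decrease: "lvl (solve (conj u t)) < lvl (solve t)"
  shows "lvl (solve (conj u' v)) = lvl (solve (conj u' w))"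
proof -
  have "A * (k + b1 * nrm u + b2 * nrm t) < A * nrm t"
    using decrease unfolding lvl_solve nrm_conj by (rule add_less_imp_less_left)
  then have "k + b1 * nrm u + b2 * nrm t < nrm t"
    by (meson mult_le_mono2 not_less)
  moreover have "nrm t \<le> b2 * nrm t" if "b2 \<noteq> 0"
    using that by simp
  ultimately have "b2 = 0"
    by linarith
  then show ?thesis
    by (simp add: lvl_solve nrm_conj)
qed

theorem mainTheorem4:
  shows "\<not> (\<exists>nrm lvl. linear_norm nrm \<and> linear_level_mapping nrm lvl \<and>
     (\<forall>X\<in>prog_terms. \<forall>Y\<in>prog_terms.
        lvl (solve (Fn ''p'' [X])) > lvl (solve (conj (Fn ''q'' [X, Y]) (Fn ''p'' [Y])))
      \<and> lvl (solve (Fn ''r'' [Fn ''f'' [X]])) > lvl (solve (conj (Fn ''s'' [Y]) (Fn ''r'' [X])))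
      \<and> lvl (solve (conj (Fn ''s'' [Y]) (Fn ''r'' [X]))) > lvl (solve (Fn ''r'' [X]))))"
proof clarify
  fix nrm lvl
  assume "linear_norm nrm" and "linear_level_mapping nrm lvl"
    and decreases: "\<forall>X\<in>prog_terms. \<forall>Y\<in>prog_terms.
        lvl (solve (Fn ''p'' [X])) > lvl (solve (conj (Fn ''q'' [X, Y]) (Fn ''p'' [Y])))
      \<and> lvl (solve (Fn ''r'' [Fn ''f'' [X]])) > lvl (solve (conj (Fn ''s'' [Y]) (Fn ''r'' [X])))
      \<and> lvl (solve (conj (Fn ''s'' [Y]) (Fn ''r'' [X]))) > lvl (solve (Fn ''r'' [X]))"
  obtain C A where lvl_solve: "\<And>t. lvl (solve t) = C + A * nrm t"
    using linear_level_mapping_unary[OF \<open>linear_level_mapping nrm lvl\<close>]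
    unfolding solve_def by blast
  obtain k b1 b2 where nrm_conj: "\<And>u v. nrm (conj u v) = k + b1 * nrm u + b2 * nrm v"
    using linear_norm_binary[OF \<open>linear_norm nrm\<close>] unfolding conj_def by blast
  define z where "z = Fn ''0'' []"
  have z: "z \<in> prog_terms" and fz: "Fn ''f'' [z] \<in> prog_terms"
    unfolding z_def by (auto intro: prog_terms.intros)
  have independent: "lvl (solve (conj u v)) = lvl (solve (conj u w))" for u v w
    using decreases z
    by (blast intro: solve_conj_level_independent_of_right[OF lvl_solve nrm_conj])
  have "lvl (solve (Fn ''r'' [Fn ''f'' [z]])) < lvl (solve (conj (Fn ''s'' [z]) (Fn ''r'' [Fn ''f'' [z]])))"
    using decreases z fz by blast
  also have "\<dots> = lvl (solve (conj (Fn ''s'' [z]) (Fn ''r'' [z])))"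
    by (rule independent)
  also have "\<dots> < lvl (solve (Fn ''r'' [Fn ''f'' [z]]))"
    using decreases z by blast
  finally show False .
qed

end
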